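(* Let $\alpha\in(0,1)$, $p>0$, and let $(X_k)_{k\ge1}$ be real numbers. For all integers $f\ge1$, $u\ge0$: $$S^{(1)}_2(f+u,f)=\sum_{v=0}^{u}S^{(1)}_3(f+u,f,v),\qquad S^{(2)}_2(f+u,f)=\sum_{v=0}^{u}S^{(2)}_3(f+u,f,v),$$ and for $0\le v\le u$, $$S^{(1)}_3(f+u,f,v)=\alpha\binom{f+v-1}{f-1}\,pX_{2f}\,S^{(2)}(u,v),\qquad S^{(2)}_3(f+u,f,v)=(1-\alpha)\binom{f+v-1}{f-1}\,pX_{2f}\,S^{(1)}(u,v).$$
   Context: A closed walk of length $k$ is a sequence $w=(w_1,\dots,w_k,w_{k+1})$ of positive integers with $w_{k+1}=w_1$; its skeleton $G_w$ is the simple undirected graph with vertex set $V_w=\{w_1,\dots,w_k\}$ and edge set $E_w=\{\{w_i,w_{i+1}\}: 1\le i\le k\}$, and for $e\in E_w$, $n_w(e)$ is the number of indices $i$ with $\{w_i,w_{i+1}\}=e$. A walk is minimal if $w_1=1$ and each vertex appearing for the first time receives the number equal to the number of distinct vertices already visited plus $1$. An essential walk is a minimal closed walk whose skeleton is a tree (its length is even, $2l$; the walk of length $0$, consisting of the single vertex $1$, is included). The root is $\rho=1$, and for walks of positive length $\nu=w_2=2$. For an essential walk $w$, let $\beta(w)$ be the number of vertices of $G_w$ at even graph distance from the root, and define $$\theta_1(w)=\alpha^{\beta(w)}(1-\alpha)^{|V_w|-\beta(w)}\prod_{e\in E_w}pX_{n_w(e)},\qquad \theta_2(w)=(1-\alpha)^{\beta(w)}\alpha^{|V_w|-\beta(w)}\prod_{e\in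 E_w}pX_{n_w(e)}.$$ Let $\Lambda(l,r)$ be the set of essential walks of length $2l$ having exactly $r$ steps starting at the root (i.e. $r=\#\{i\le 2l: w_i=1\}$), and $S^{(j)}(l,r)=\sum_{w\in\Lambda(l,r)}\theta_j(w)$ for $j=1,2$. Let $\Lambda_2(l,r)$ be the set of walks in $\Lambda(l,r)$ whose skeleton has exactly one edge incident to the root, and $S^{(j)}_2(l,r)=\sum_{w\in\Lambda_2(l,r)}\theta_j(w)$. For $w\in\Lambda_2(f+u,f)$ let $v$ be the number of steps of $w$ starting at vertex $2$ other than the steps $2\to1$; let $\Lambda_3(f+u,f,v)$ be the set of walks in $\Lambda_2(f+u,f)$ with this value of $v$, and $S^{(j)}_3(f+u,f,v)=\sum_{w\in\Lambda_3(f+u,f,v)}\theta_j(w)$. *)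

theory Defs
  imports Complex_Main
begin

text \<open>A walk w = (w_1,...,w_k,w_{k+1}) is represented by the list [w_1,...,w_{k+1}];
  its length is k = length w - 1.  Index i (1-based) corresponds to list position i-1.\<close>

definition walk_len :: "nat list \<Rightarrow> nat" where
  "walk_len w = length w - 1"

definition closed_walk :: "nat list \<Rightarrow> bool" where
  "closed_walk w \<longleftrightarrow> w \<noteq> [] \<and> (\<forall>x\<in>set w. 0 < x) \<and> last w = hd w"

definition minimal_walk :: "nat list \<Rightarrow> bool" where
  "minimal_walk w \<longleftrightarrow> w \<noteq> [] \<and> hd w = 1 \<and>
     (\<forall>i<length w. w ! i \<notin> set (take i w) \<longrightarrow> w ! i = card (set (take i w)) + 1)"

definition walk_vertices :: "nat list \<Rightarrow> nat set" where
  "walk_vertices w = set w"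

definition walk_edges :: "nat list \<Rightarrow> nat set set" where
  "walk_edges w = {{w ! i, w ! (i + 1)} | i. i < walk_len w}"

definition edge_mult :: "nat list \<Rightarrow> nat set \<Rightarrow> nat" where
  "edge_mult w e = card {i. i < walk_len w \<and> {w ! i, w ! (i + 1)} = e}"

definition adj :: "'a set set \<Rightarrow> ('a \<times> 'a) set" where
  "adj E = {(x, y). {x, y} \<in> E}"

definition simple_graph :: "'a set \<Rightarrow> 'a set set \<Rightarrow> bool" where
  "simple_graph V E \<longleftrightarrow> finite V \<and> (\<forall>e\<in>E. \<exists>x y. x \<noteq> y \<and> x \<in> V \<and> y \<in> V \<and> e = {x, y})"

definition connected_graph :: "'a set \<Rightarrow> 'a set set \<Rightarrow> bool" where
  "connected_graph V E \<longleftrightarrow> (\<forall>x\<in>V. \<forall>y\<in>V. (x, y) \<in> (adj E)\<^sup>*)"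

definition has_cycle :: "'a set set \<Rightarrow> bool" where
  "has_cycle E \<longleftrightarrow> (\<exists>c. distinct c \<and> 3 \<le> length c \<and>
      (\<forall>i<length c. {c ! i, c ! ((i + 1) mod length c)} \<in> E))"

definition is_tree :: "'a set \<Rightarrow> 'a set set \<Rightarrow> bool" where
  "is_tree V E \<longleftrightarrow> simple_graph V E \<and> connected_graph V E \<and> \<not> has_cycle E"

definition graph_dist :: "'a set set \<Rightarrow> 'a \<Rightarrow> 'a \<Rightarrow> nat" where
  "graph_dist E x y = (LEAST n. (x, y) \<in> (adj E) ^^ n)"

definition essential :: "nat list \<Rightarrow> bool" where
  "essential w \<longleftrightarrow> closed_walk w \<and> minimal_walk w \<and> is_tree (walk_vertices w) (walk_edges w)"

definition beta :: "nat list \<Rightarrow> nat" where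
  "beta w = card {x \<in> walk_vertices w. even (graph_dist (walk_edges w) 1 x)}"

definition theta1 :: "real \<Rightarrow> real \<Rightarrow> (nat \<Rightarrow> real) \<Rightarrow> nat list \<Rightarrow> real" where
  "theta1 \<alpha> p X w = \<alpha> ^ beta w * (1 - \<alpha>) ^ (card (walk_vertices w) - beta w) *
      (\<Prod>e\<in>walk_edges w. p * X (edge_mult w e))"

definition theta2 :: "real \<Rightarrow> real \<Rightarrow> (nat \<Rightarrow> real) \<Rightarrow> nat list \<Rightarrow> real" where
  "theta2 \<alpha> p X w = (1 - \<alpha>) ^ beta w * \<alpha> ^ (card (walk_vertices w) - beta w) *
      (\<Prod>e\<in>walk_edges w. p * X (edge_mult w e))"

definition root_steps :: "nat list \<Rightarrow> nat" where
  "root_steps w = card {i. i < walk_len w \<and> w ! i = 1}"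

definition Lam :: "nat \<Rightarrow> nat \<Rightarrow> nat list set" where
  "Lam l r = {w. essential w \<and> walk_len w = 2 * l \<and> root_steps w = r}"

definition Lam2 :: "nat \<Rightarrow> nat \<Rightarrow> nat list set" where
  "Lam2 l r = {w \<in> Lam l r. card {e \<in> walk_edges w. 1 \<in> e} = 1}"

definition vcount :: "nat list \<Rightarrow> nat" where
  "vcount w = card {i. i < walk_len w \<and> w ! i = 2 \<and> w ! (i + 1) \<noteq> 1}"

definition Lam3 :: "nat \<Rightarrow> nat \<Rightarrow> nat \<Rightarrow> nat list set" where
  "Lam3 l r v = {w \<in> Lam2 l r. vcount w = v}"

definition S :: "(nat list \<Rightarrow> real) \<Rightarrow> nat \<Rightarrow> nat \<Rightarrow> real" where
  "S \<theta> l r = (\<Sum>w\<in>Lam l r. \<theta> w)"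

definition S2 :: "(nat list \<Rightarrow> real) \<Rightarrow> nat \<Rightarrow> nat \<Rightarrow> real" where
  "S2 \<theta> l r = (\<Sum>w\<in>Lam2 l r. \<theta> w)"

definition S3 :: "(nat list \<Rightarrow> real) \<Rightarrow> nat \<Rightarrow> nat \<Rightarrow> nat \<Rightarrow> real" where
  "S3 \<theta> l r v = (\<Sum>w\<in>Lam3 l r v. \<theta> w)"

end

theory Submission
  imports Defs
begin

text \<open>Deleting the root of a walk w in Lam2 (f + u) f, together with all visits to it, and
  relabelling x \<mapsto> x - 1 leaves an essential walk W of length 2u rooted at the old vertex 2.
  Besides the first step 1 \<rightarrow> 2, the f root steps of w are f - 1 excursions 2 \<rightarrow> 1 \<rightarrow> 2,
  distributed over the v + 1 visits of W to its root, where v = vcount w is the number of root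
  steps of W.  This is a bijection between Lam3 (f + u) f v and the pairs of a weak composition
  of f - 1 into v + 1 parts and a walk in Lam u v.  Under it the edge {1, 2} gets multiplicity
  2f, all other edges keep theirs, and the vertices at even distance from the new root are the
  root itself together with the vertices at odd distance in W; so theta1 w is \<alpha> p X(2f) times
  theta2 W, and symmetrically.\<close>

section \<open>Steps and edges of a walk\<close>

definition steps :: "'a list \<Rightarrow> ('a \<times> 'a) list" where
  "steps w = zip w (tl w)"

lemma steps_Nil [simp]: "steps [] = []"
  and steps_single [simp]: "steps [x] = []"
  and steps_Cons_Cons [simp]: "steps (x # y # xs) = (x, y) # steps (y # xs)"
  by (simp_all add: steps_def)

lemma steps_Cons: "xs \<noteq> [] \<Longrightarrow> steps (x # xs) = (x, hd xs) # steps xs"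
  by (cases xs) auto

lemma steps_append_Cons: "steps (xs @ y # ys) = steps (xs @ [y]) @ steps (y # ys)"
  by (induction xs rule: induct_list012) auto

lemma steps_snoc: "xs \<noteq> [] \<Longrightarrow> steps (xs @ [y]) = steps xs @ [(last xs, y)]"
  by (induction xs rule: induct_list012) auto

lemma set_steps_subset: "set (steps w) \<subseteq> set w \<times> set w"
proof -
  have "set (tl w) \<subseteq> set w" by (cases w) auto
  then show ?thesis unfolding steps_def by (auto dest: set_zip_leftD set_zip_rightD)
qed

lemma map_fst_steps: "map fst (steps w) = butlast w"
  unfolding steps_def by (simp add: map_fst_zip_take butlast_conv_take)

lemma length_steps: "length (steps w) = walk_len w"
  by (simp add: steps_def walk_len_def)

lemma nth_steps: "i < walk_len w \<Longrightarrow> steps w ! i = (w ! i, w ! Suc i)"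
  by (simp add: steps_def walk_len_def nth_tl)

lemma card_step_indices:
  "card {i. i < walk_len w \<and> P (w ! i) (w ! (i + 1))} = length (filter (\<lambda>(a, b). P a b) (steps w))"
  by (simp add: length_filter_conv_card length_steps nth_steps cong: conj_cong)

lemma edge_mult_conv_steps: "edge_mult w e = length (filter (\<lambda>(a, b). {a, b} = e) (steps w))"
  unfolding edge_mult_def using card_step_indices[of w "\<lambda>a b. {a, b} = e"] by simp

lemma root_steps_conv_steps: "root_steps w = length (filter (\<lambda>(a, b). a = 1) (steps w))"
  unfolding root_steps_def using card_step_indices[of w "\<lambda>a b. a = 1"] by simp

lemma vcount_conv_steps: "vcount w = length (filter (\<lambda>(a, b). a = 2 \<and> b \<noteq> 1) (steps w))"
  unfolding vcount_def using card_step_indices[of w "\<lambda>a b. a = 2 \<and> b \<noteq> 1"] by simp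

lemma walk_edges_conv_steps: "walk_edges w = (\<lambda>(a, b). {a, b}) ` set (steps w)"
  unfolding walk_edges_def set_conv_nth by (force simp: length_steps nth_steps)

lemma walk_edges_Nil [simp]: "walk_edges [] = {}"
  and walk_edges_single [simp]: "walk_edges [x] = {}"
  and walk_edges_Cons_Cons [simp]: "walk_edges (x # y # xs) = insert {x, y} (walk_edges (y # xs))"
  by (simp_all add: walk_edges_conv_steps)

lemma walk_edges_snoc: "w \<noteq> [] \<Longrightarrow> walk_edges (w @ [x]) = insert {last w, x} (walk_edges w)"
  by (simp add: walk_edges_conv_steps steps_snoc)

lemma walk_edges_Cons_snoc:
  "M \<noteq> [] \<Longrightarrow> walk_edges (x # M @ [y]) = insert {x, hd M} (insert {last M, y} (walk_edges M))"
  by (simp add: walk_edges_conv_steps steps_Cons steps_snoc hd_append)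

lemma finite_walk_edges [simp]: "finite (walk_edges w)"
  by (simp add: walk_edges_conv_steps)

lemma walk_edges_subset: "e \<in> walk_edges w \<Longrightarrow> e \<subseteq> set w"
  using set_steps_subset[of w] unfolding walk_edges_conv_steps by auto

lemma walk_edge_doubleton: "e \<in> walk_edges w \<Longrightarrow> \<exists>a b. e = {a, b}"
  unfolding walk_edges_conv_steps by auto

lemma sym_adj: "sym (adj E)"
  by (auto simp: adj_def sym_def insert_commute)

lemma adj_mono: "E \<subseteq> F \<Longrightarrow> adj E \<subseteq> adj F"
  by (auto simp: adj_def)

lemma walk_reaches_from_hd: "w \<noteq> [] \<Longrightarrow> a \<in> set w \<Longrightarrow> (hd w, a) \<in> (adj (walk_edges w))\<^sup>*"
proof (induction w arbitrary: a rule: rev_induct)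
  case (snoc x w)
  show ?case
  proof (cases "w = []")
    case False
    have sub: "(adj (walk_edges w))\<^sup>* \<subseteq> (adj (walk_edges (w @ [x])))\<^sup>*"
      using False by (intro rtrancl_mono adj_mono) (auto simp: walk_edges_snoc)
    have "(hd w, last w) \<in> (adj (walk_edges (w @ [x])))\<^sup>*"
      using snoc.IH False sub by auto
    moreover have "(last w, x) \<in> adj (walk_edges (w @ [x]))"
      using False by (simp add: walk_edges_snoc adj_def)
    ultimately show ?thesis
      using snoc sub False by (cases "a = x") auto
  qed (use snoc in simp)
qed simp

lemma walk_connected: "w \<noteq> [] \<Longrightarrow> connected_graph (set w) (walk_edges w)"
  unfolding connected_graph_def
  by (meson walk_reaches_from_hd sym_adj sym_rtrancl symD rtrancl_trans)

section \<open>Walks tracing trees\<close>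

definition loopfree :: "'a set set \<Rightarrow> bool" where
  "loopfree E \<longleftrightarrow> (\<forall>e\<in>E. card e = 2)"

lemma simple_graph_walk_iff_loopfree: "simple_graph (set w) (walk_edges w) \<longleftrightarrow> loopfree (walk_edges w)"
proof -
  have "(\<exists>x y. x \<noteq> y \<and> x \<in> set w \<and> y \<in> set w \<and> e = {x, y}) \<longleftrightarrow> card e = 2"
    if "e \<in> walk_edges w" for e
    using walk_edge_doubleton[OF that] walk_edges_subset[OF that] by (auto simp: card_2_iff)
  then show ?thesis unfolding simple_graph_def loopfree_def by auto
qed

lemma has_cycle_mono: "has_cycle E \<Longrightarrow> E \<subseteq> F \<Longrightarrow> has_cycle F"
  unfolding has_cycle_def by blast

lemma not_has_cycle_empty: "\<not> has_cycle {}"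
  unfolding has_cycle_def by fastforce

lemma has_cycle_closing_path:
  assumes "distinct p" "3 \<le> length p" "successively (\<lambda>a b. {a, b} \<in> E) p" "{last p, hd p} \<in> E"
  shows "has_cycle E"
  unfolding has_cycle_def
proof (intro exI[of _ p] conjI allI impI)
  fix i assume i: "i < length p"
  show "{p ! i, p ! ((i + 1) mod length p)} \<in> E"
  proof (cases "i + 1 < length p")
    case True
    then show ?thesis using successively_nth[OF assms(3)] by simp
  next
    case False
    then have "i = length p - 1" "i + 1 = length p" using i by simp_all
    moreover have "p \<noteq> []" using assms(2) by auto
    ultimately show ?thesis using assms(4) by (simp add: last_conv_nth hd_conv_nth)
  qed
qed (use assms in auto)

lemma has_cycle_insert_pendant:
  assumes x: "x \<notin> \<Union> E" and cyc: "has_cycle (insert {y, x} E)"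
  shows "has_cycle E"
proof -
  obtain c where c: "distinct c" "3 \<le> length c"
    and edge: "\<And>i. i < length c \<Longrightarrow> {c ! i, c ! ((i + 1) mod length c)} \<in> insert {y, x} E"
    using cyc unfolding has_cycle_def by blast
  let ?L = "length c"
  have neighbour: "a = y" if "{a, x} \<in> insert {y, x} E \<or> {x, a} \<in> insert {y, x} E" "a \<noteq> x" for a
    using that x by (auto simp: doubleton_eq_iff)
  show ?thesis
  proof (cases "x \<in> set c")
    case True
    then obtain k where k: "k < ?L" "c ! k = x" by (meson in_set_conv_nth)
    define k1 where "k1 = (k + 1) mod ?L"
    define k0 where "k0 = (if k = 0 then ?L - 1 else k - 1)"
    have idx: "k1 < ?L" "k0 < ?L" "k1 \<noteq> k" "k0 \<noteq> k" "k1 \<noteq> k0" "(k0 + 1) mod ?L = k"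
      using k(1) c(2) unfolding k1_def k0_def by (auto simp: mod_Suc)
    have "c ! k1 \<noteq> c ! k" "c ! k0 \<noteq> c ! k" "c ! k1 \<noteq> c ! k0"
      using c(1) k(1) idx by (simp_all add: nth_eq_iff_index_eq)
    moreover have "{x, c ! k1} \<in> insert {y, x} E" "{c ! k0, x} \<in> insert {y, x} E"
      using edge[of k] edge[of k0] k idx unfolding k1_def by simp_all
    ultimately show ?thesis using neighbour k(2) by metis
  next
    case False
    have "{c ! i, c ! ((i + 1) mod ?L)} \<in> E" if "i < ?L" for i
    proof -
      have "(i + 1) mod ?L < ?L" using that by (intro mod_less_divisor) linarith
      then have "c ! i \<noteq> x" "c ! ((i + 1) mod ?L) \<noteq> x"
        using False that nth_mem by metis+
      then show ?thesis using edge that by (auto simp: doubleton_eq_iff)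
    qed
    then show ?thesis using c unfolding has_cycle_def by blast
  qed
qed

lemma rtrancl_imp_distinct_path:
  assumes "(a, b) \<in> R\<^sup>*"
  shows "\<exists>p. p \<noteq> [] \<and> hd p = a \<and> last p = b \<and> distinct p \<and> successively (\<lambda>x y. (x, y) \<in> R) p"
  using assms
proof (induction rule: rtrancl_induct)
  case base
  then show ?case by (intro exI[of _ "[a]"]) simp
next
  case (step y z)
  then obtain p where p: "p \<noteq> []" "hd p = a" "last p = y" "distinct p"
    "successively (\<lambda>x y. (x, y) \<in> R) p"
    by blast
  show ?case
  proof (cases "z \<in> set p")
    case True
    then obtain p1 p2 where pp: "p = p1 @ z # p2" by (meson split_list)
    have "successively (\<lambda>x y. (x, y) \<in> R) (p1 @ [z])"
      using p(5) unfolding pp by (metis append.assoc append_Cons append_Nil successively_append_iff)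
    then show ?thesis using p(2,4) pp by (intro exI[of _ "p1 @ [z]"]) (cases p1, auto)
  next
    case False
    then show ?thesis
      using p step by (intro exI[of _ "p @ [z]"]) (simp add: successively_append_iff)
  qed
qed

inductive tree_walk :: "nat list \<Rightarrow> bool" where
  tree_walk_Nil: "tree_walk []"
| tree_walk_single: "tree_walk [x]"
| tree_walk_snoc: "tree_walk w \<Longrightarrow> w \<noteq> [] \<Longrightarrow> last w \<noteq> x \<Longrightarrow>
    (x \<in> set w \<Longrightarrow> {last w, x} \<in> walk_edges w) \<Longrightarrow> tree_walk (w @ [x])"

lemma tree_walk_snoc_iff:
  "w \<noteq> [] \<Longrightarrow> tree_walk (w @ [x]) \<longleftrightarrow>
     tree_walk w \<and> last w \<noteq> x \<and> (x \<in> set w \<longrightarrow> {last w, x} \<in> walk_edges w)"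
  by (auto elim: tree_walk.cases intro: tree_walk_snoc)

lemma card_set_le_card_walk_edges: "w \<noteq> [] \<Longrightarrow> card (set w) \<le> card (walk_edges w) + 1"
proof (induction w rule: rev_induct)
  case (snoc x w)
  show ?case
  proof (cases "w = []")
    case False
    have "x \<notin> set w \<Longrightarrow> {last w, x} \<notin> walk_edges w" using walk_edges_subset by blast
    then show ?thesis
      using snoc False card_insert_le[of "walk_edges w" "{last w, x}"]
      by (cases "x \<in> set w") (auto simp: walk_edges_snoc insert_absorb)
  qed simp
qed simp

lemma tree_walk_loopfree_card:
  "tree_walk w \<Longrightarrow> w \<noteq> [] \<Longrightarrow> loopfree (walk_edges w) \<and> card (walk_edges w) + 1 = card (set w)"
proof (induction rule: tree_walk.induct)
  case (tree_walk_snoc w x)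
  have "x \<notin> set w \<Longrightarrow> {last w, x} \<notin> walk_edges w" using walk_edges_subset by blast
  then show ?case using tree_walk_snoc
    by (cases "x \<in> set w") (auto simp: walk_edges_snoc loopfree_def insert_absorb)
qed (auto simp: loopfree_def)

lemma tree_walk_if_loopfree_card:
  "w \<noteq> [] \<Longrightarrow> loopfree (walk_edges w) \<Longrightarrow> card (walk_edges w) + 1 = card (set w) \<Longrightarrow> tree_walk w"
proof (induction w rule: rev_induct)
  case (snoc x w)
  show ?case
  proof (cases "w = []")
    case True then show ?thesis by (simp add: tree_walk_single)
  next
    case False
    have E: "walk_edges (w @ [x]) = insert {last w, x} (walk_edges w)"
      using False by (simp add: walk_edges_snoc)
    have lfw: "loopfree (walk_edges w)" using snoc.prems(2) E by (simp add: loopfree_def)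
    have ne: "last w \<noteq> x" using snoc.prems(2) E by (auto simp: loopfree_def)
    have le: "card (set w) \<le> card (walk_edges w) + 1"
      using card_set_le_card_walk_edges False by simp
    show ?thesis
    proof (cases "x \<in> set w")
      case True
      then have "{last w, x} \<in> walk_edges w"
        using snoc.prems(3) le E by (auto simp: card_insert_if insert_absorb split: if_splits)
      then show ?thesis
        using snoc.IH snoc.prems(3) False lfw ne True E by (simp add: tree_walk_snoc_iff insert_absorb)
    next
      case nx: False
      then have "{last w, x} \<notin> walk_edges w" using walk_edges_subset by blast
      then show ?thesis
        using snoc.IH snoc.prems(3) False lfw ne nx E by (simp add: tree_walk_snoc_iff)
    qed
  qed
qed simp

lemma tree_walk_acyclic: "tree_walk w \<Longrightarrow> \<not> has_cycle (walk_edges w)"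
proof (induction rule: tree_walk.induct)
  case (tree_walk_snoc w x)
  show ?case
  proof (cases "x \<in> set w")
    case True
    then show ?thesis using tree_walk_snoc by (simp add: walk_edges_snoc insert_absorb)
  next
    case False
    then have "x \<notin> \<Union> (walk_edges w)" using walk_edges_subset by blast
    moreover have "walk_edges (w @ [x]) = insert {last w, x} (walk_edges w)"
      using tree_walk_snoc.hyps(2) by (rule walk_edges_snoc)
    ultimately show ?thesis using has_cycle_insert_pendant tree_walk_snoc.IH by metis
  qed
qed (simp_all add: not_has_cycle_empty)

lemma retraced_edge_if_is_tree:
  assumes w: "w \<noteq> []" and x: "x \<in> set w" "x \<noteq> last w"
    and acyclic: "\<not> has_cycle (walk_edges (w @ [x]))"
  shows "{last w, x} \<in> walk_edges w"
proof (rule ccontr)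
  assume nE: "{last w, x} \<notin> walk_edges w"
  let ?E = "walk_edges (w @ [x])"
  have E: "?E = insert {last w, x} (walk_edges w)" using w by (rule walk_edges_snoc)
  have "(x, last w) \<in> (adj (walk_edges w))\<^sup>*"
    using walk_connected[OF w] x(1) last_in_set[OF w] unfolding connected_graph_def by simp
  from rtrancl_imp_distinct_path[OF this] obtain p where p: "p \<noteq> []" "hd p = x" "last p = last w"
    "distinct p" "successively (\<lambda>a b. (a, b) \<in> adj (walk_edges w)) p"
    by blast
  have "length p \<noteq> 1"
  proof
    assume "length p = 1"
    then have "p = [x]" using p(2) by (cases p) auto
    then show False using p(3) x(2) by simp
  qed
  moreover have "length p \<noteq> 2"
  proof
    assume "length p = 2"
    then have "p = [x, last w]" using p(2,3) by (cases p) (auto simp: numeral_2_eq_2 length_Suc_conv)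
    then show False using p(5) nE by (simp add: adj_def insert_commute)
  qed
  ultimately have "3 \<le> length p" using p(1) by (cases "length p") auto
  moreover have "successively (\<lambda>a b. {a, b} \<in> ?E) p"
    using p(5) by (rule successively_mono) (simp add: E adj_def)
  moreover have "{last p, hd p} \<in> ?E" using p(2,3) E by simp
  ultimately have "has_cycle ?E" by (intro has_cycle_closing_path[OF p(4)])
  then show False using acyclic by simp
qed

lemma tree_walk_if_is_tree: "w \<noteq> [] \<Longrightarrow> is_tree (set w) (walk_edges w) \<Longrightarrow> tree_walk w"
proof (induction w rule: rev_induct)
  case (snoc x w)
  show ?case
  proof (cases "w = []")
    case True then show ?thesis by (simp add: tree_walk_single)
  next
    case False
    have E: "walk_edges (w @ [x]) = insert {last w, x} (walk_edges w)"
      using False by (rule walk_edges_snoc)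
    have lf: "loopfree (walk_edges (w @ [x]))" and ac: "\<not> has_cycle (walk_edges (w @ [x]))"
      using snoc.prems(2) unfolding is_tree_def simple_graph_walk_iff_loopfree by simp_all
    have "loopfree (walk_edges w)" using lf E by (simp add: loopfree_def)
    moreover have "\<not> has_cycle (walk_edges w)" using ac E has_cycle_mono by blast
    ultimately have "is_tree (set w) (walk_edges w)"
      using walk_connected[OF False] unfolding is_tree_def simple_graph_walk_iff_loopfree by simp
    then have "tree_walk w" using snoc.IH False by simp
    moreover have "last w \<noteq> x" using lf E by (auto simp: loopfree_def)
    ultimately show ?thesis
      using False ac retraced_edge_if_is_tree[of w x] by (simp add: tree_walk_snoc_iff)
  qed
qed simp

lemma is_tree_walk_iff_tree_walk: "w \<noteq> [] \<Longrightarrow> is_tree (set w) (walk_edges w) \<longleftrightarrow> tree_walk w"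
proof
  assume "w \<noteq> []" "tree_walk w"
  then show "is_tree (set w) (walk_edges w)"
    using tree_walk_loopfree_card tree_walk_acyclic walk_connected
    unfolding is_tree_def simple_graph_walk_iff_loopfree by simp
qed (rule tree_walk_if_is_tree)

lemma is_tree_walk_iff_card:
  "w \<noteq> [] \<Longrightarrow> is_tree (set w) (walk_edges w) \<longleftrightarrow>
     loopfree (walk_edges w) \<and> card (walk_edges w) + 1 = card (set w)"
  using is_tree_walk_iff_tree_walk tree_walk_loopfree_card tree_walk_if_loopfree_card by blast

section \<open>Proper two-colourings and the count beta\<close>

definition proper_colouring :: "('a \<Rightarrow> bool) \<Rightarrow> 'a set set \<Rightarrow> bool" where
  "proper_colouring col E \<longleftrightarrow> (\<forall>a b. {a, b} \<in> E \<longrightarrow> col a \<noteq> col b)"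

lemma tree_walk_proper_colouring: "tree_walk w \<Longrightarrow> \<exists>col. proper_colouring col (walk_edges w)"
proof (induction rule: tree_walk.induct)
  case (tree_walk_snoc w x)
  then obtain col where col: "proper_colouring col (walk_edges w)" by blast
  show ?case
  proof (cases "x \<in> set w")
    case True
    then show ?thesis using tree_walk_snoc col by (auto simp: walk_edges_snoc insert_absorb)
  next
    case False
    have "x \<notin> e" if "e \<in> walk_edges w" for e using walk_edges_subset[OF that] False by blast
    then have "proper_colouring (col(x := \<not> col (last w))) (walk_edges (w @ [x]))"
      using col tree_walk_snoc.hyps(2,3)
      by (auto simp: proper_colouring_def walk_edges_snoc doubleton_eq_iff)
    then show ?thesis by blast
  qed
qed (auto simp: proper_colouring_def)

lemma proper_colouring_relpow:
  "proper_colouring col E \<Longrightarrow> (a, b) \<in> adj E ^^ n \<Longrightarrow> col a = col b \<longleftrightarrow> even n"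
proof (induction n arbitrary: b)
  case (Suc n)
  then obtain c where c: "(a, c) \<in> adj E ^^ n" "(c, b) \<in> adj E" by (meson relpow_Suc_E)
  then have "col c \<noteq> col b" using Suc.prems(1) by (auto simp: proper_colouring_def adj_def)
  then show ?case using Suc.IH[OF Suc.prems(1) c(1)] by auto
qed simp

lemma even_graph_dist_iff:
  assumes "proper_colouring col E" "(a, b) \<in> (adj E)\<^sup>*"
  shows "even (graph_dist E a b) \<longleftrightarrow> col a = col b"
proof -
  obtain n where "(a, b) \<in> adj E ^^ n" using assms(2) rtrancl_power by blast
  then have "(a, b) \<in> adj E ^^ graph_dist E a b" unfolding graph_dist_def by (rule LeastI)
  then show ?thesis using proper_colouring_relpow[OF assms(1)] by simp
qed

lemma beta_eq_card_colour_class: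
  assumes "w \<noteq> []" "1 \<in> set w" "proper_colouring col (walk_edges w)"
  shows "beta w = card {x \<in> set w. col x = col 1}"
proof -
  have "(1, x) \<in> (adj (walk_edges w))\<^sup>*" if "x \<in> set w" for x
    using walk_connected[OF assms(1)] assms(2) that unfolding connected_graph_def by simp
  then have "{x \<in> set w. even (graph_dist (walk_edges w) 1 x)} = {x \<in> set w. col x = col 1}"
    using even_graph_dist_iff[OF assms(3)] by auto
  then show ?thesis unfolding beta_def walk_vertices_def by simp
qed

section \<open>Lifting a walk\<close>

definition shuttle :: "nat \<Rightarrow> nat list" where
  "shuttle c = concat (replicate c [2, 1]) @ [2]"

fun expand :: "nat list \<Rightarrow> nat list \<Rightarrow> nat list" where
  "expand cs [] = []"
| "expand cs (x # xs) =
    (if x = 1 then shuttle (hd cs) @ expand (tl cs) xs else Suc x # expand cs xs)"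

definition lift_walk :: "nat list \<Rightarrow> nat list \<Rightarrow> nat list" where
  "lift_walk cs W = 1 # expand cs W @ [1]"

definition liftable :: "nat list \<Rightarrow> nat list \<Rightarrow> bool" where
  "liftable cs W \<longleftrightarrow> W \<noteq> [] \<and> hd W = 1 \<and> last W = 1 \<and> 0 \<notin> set W \<and> length cs = count_list W 1"

lemma shuttle_0 [simp]: "shuttle 0 = [2]"
  and shuttle_Suc: "shuttle (Suc c) = 2 # 1 # shuttle c"
  by (simp_all add: shuttle_def)

lemma shuttle_ne_Nil [simp]: "shuttle c \<noteq> []"
  and last_shuttle [simp]: "last (shuttle c) = 2"
  by (simp_all add: shuttle_def)

lemma hd_shuttle [simp]: "hd (shuttle c) = 2"
  by (cases c) (simp_all add: shuttle_Suc)

lemma set_shuttle_subset: "set (shuttle c) \<subseteq> {1, 2}"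
  by (induction c) (simp_all add: shuttle_Suc)

lemma length_shuttle [simp]: "length (shuttle c) = 2 * c + 1"
  by (induction c) (simp_all add: shuttle_Suc)

lemma insert_1_set_take_shuttle: "0 < j \<Longrightarrow> insert 1 (set (take j (shuttle c))) = {1, 2}"
proof -
  assume j: "0 < j"
  have "set (take j (shuttle c)) \<subseteq> {1, 2}"
    using set_take_subset[of j "shuttle c"] set_shuttle_subset[of c] by blast
  moreover have "2 \<in> set (take j (shuttle c))"
    using j hd_in_set[of "take j (shuttle c)"] by (simp add: hd_take)
  ultimately show ?thesis by blast
qed

lemma insert_1_set_shuttle: "insert 1 (set (shuttle c)) = {1, 2}"
  using insert_1_set_take_shuttle[of "length (shuttle c)" c] by simp

lemma steps_shuttle: "steps (shuttle c) = concat (replicate c [(2, 1), (1, 2)])"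
  by (induction c) (simp_all add: shuttle_Suc steps_Cons)

lemma expand_eq_Nil_iff [simp]: "expand cs W = [] \<longleftrightarrow> W = []"
  by (cases W) auto

lemma hd_expand: "W \<noteq> [] \<Longrightarrow> hd (expand cs W) = Suc (hd W)"
  by (cases W) auto

lemma last_expand: "W \<noteq> [] \<Longrightarrow> last (expand cs W) = Suc (last W)"
  by (induction W arbitrary: cs) auto

lemma length_expand: "length cs = count_list W 1 \<Longrightarrow> length (expand cs W) = length W + 2 * sum_list cs"
proof (induction W arbitrary: cs)
  case (Cons x xs)
  then show ?case by (cases cs) auto
qed simp

lemma insert_1_set_expand: "insert 1 (set (expand cs W)) = insert 1 (Suc ` set W)"
proof (induction W arbitrary: cs)
  case (Cons x xs)
  show ?case
  proof (cases "x = 1")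
    case True
    have "insert 1 (set (expand cs (x # xs))) =
        insert 1 (set (shuttle (hd cs))) \<union> insert 1 (set (expand (tl cs) xs))"
      using True by auto
    also have "\<dots> = {1, 2} \<union> insert 1 (Suc ` set xs)"
      unfolding insert_1_set_shuttle Cons.IH ..
    finally show ?thesis using True by auto
  next
    case False
    then have "insert 1 (set (expand cs (x # xs))) = insert (Suc x) (insert 1 (set (expand cs xs)))"
      by auto
    then show ?thesis unfolding Cons.IH by auto
  qed
qed simp

lemma expand_append: "expand cs (xs @ ys) = expand cs xs @ expand (drop (count_list xs 1) cs) ys"
  by (induction xs arbitrary: cs) (auto simp: drop_Suc)

lemma length_filter_concat_replicate:
  "length (filter P (concat (replicate c xs))) = c * length (filter P xs)"
  by (induction c) auto

lemma length_filter_steps_expand: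
  assumes "length cs = count_list W 1"
  shows "length (filter P (steps (expand cs W))) =
    length (filter (P \<circ> map_prod Suc Suc) (steps W)) + sum_list cs * length (filter P [(2, 1), (1, 2)])"
  using assms
proof (induction W arbitrary: cs)
  case (Cons x xs)
  define cs' where "cs' = (if x = 1 then tl cs else cs)"
  define B where "B = (if x = 1 then shuttle (hd cs) else [Suc x])"
  have expand_Cons: "expand cs (x # xs) = B @ expand cs' xs" by (simp add: B_def cs'_def)
  have length_cs': "length cs' = count_list xs 1" using Cons.prems by (auto simp: cs'_def)
  have sum_cs: "sum_list cs = (if x = 1 then hd cs else 0) + sum_list cs'"
    using Cons.prems by (cases cs) (auto simp: cs'_def)
  have filter_B: "length (filter P (steps B)) = (if x = 1 then hd cs else 0) * length (filter P [(2, 1), (1, 2)])"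
    by (simp add: B_def steps_shuttle length_filter_concat_replicate)
  show ?case
  proof (cases xs)
    case Nil
    then show ?thesis using filter_B sum_cs length_cs' expand_Cons by (simp add: cs'_def)
  next
    case (Cons y ys)
    have B: "B \<noteq> []" "last B = Suc x" by (auto simp: B_def)
    have ne: "expand cs' xs \<noteq> []" using Cons by simp
    obtain rest where rest: "expand cs' xs = Suc y # rest"
      using ne hd_expand[of xs cs'] Cons by (auto simp: neq_Nil_conv)
    have "steps (expand cs (x # xs)) = steps (B @ [Suc y]) @ steps (expand cs' xs)"
      unfolding expand_Cons rest by (rule steps_append_Cons)
    also have "steps (B @ [Suc y]) = steps B @ [(Suc x, Suc y)]"
      using B steps_snoc by metis
    finally have "steps (expand cs (x # xs)) = steps B @ [(Suc x, Suc y)] @ steps (expand cs' xs)"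
      by simp
    then show ?thesis
      using Cons filter_B sum_cs "Cons.IH"[OF length_cs'] by (simp add: algebra_simps)
  qed
qed simp

lemma prefix_set_expand_shifted: "\<exists>i. insert 1 (set (take j (expand cs W))) = insert 1 (Suc ` set (take i W))"
proof (induction W arbitrary: cs j)
  case (Cons x xs)
  define cs' where "cs' = (if x = 1 then tl cs else cs)"
  define B where "B = (if x = 1 then shuttle (hd cs) else [Suc x])"
  have expand_Cons: "expand cs (x # xs) = B @ expand cs' xs" by (simp add: B_def cs'_def)
  have set_take_B: "insert 1 (set (take k B)) = {1, Suc x}" if "0 < k" for k
    using insert_1_set_take_shuttle[OF that] that by (auto simp: B_def take_Cons')
  show ?case
  proof (cases "j \<le> length B")
    case True
    show ?thesis
    proof (cases "j = 0")
      case False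
      then have "insert 1 (set (take j (expand cs (x # xs)))) = insert 1 (Suc ` set (take 1 (x # xs)))"
        using set_take_B True expand_Cons by simp
      then show ?thesis by blast
    qed (auto intro: exI[of _ 0])
  next
    case False
    obtain i where i: "insert 1 (set (take (j - length B) (expand cs' xs))) = insert 1 (Suc ` set (take i xs))"
      using Cons.IH by blast
    have "length B > 0" by (simp add: B_def)
    then have "insert 1 (set B) = {1, Suc x}" using set_take_B[of "length B"] by simp
    moreover have "take j (expand cs (x # xs)) = B @ take (j - length B) (expand cs' xs)"
      using expand_Cons False by simp
    ultimately have "insert 1 (set (take j (expand cs (x # xs)))) = insert 1 (Suc ` set (take (Suc i) (x # xs)))"
      using i by auto
    then show ?thesis by blast
  qed
qed simp

lemma shifted_prefix_set_expand: "\<exists>j. insert 1 (set (take j (expand cs W))) = insert 1 (Suc ` set (take i W))"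
proof -
  have "expand cs W = expand cs (take i W) @ expand (drop (count_list (take i W) 1) cs) (drop i W)"
    using expand_append by (metis append_take_drop_id)
  then have "take (length (expand cs (take i W))) (expand cs W) = expand cs (take i W)" by simp
  then show ?thesis using insert_1_set_expand by metis
qed

lemma minimal_walk_iff_prefix_intervals:
  "minimal_walk w \<longleftrightarrow> w \<noteq> [] \<and> (\<forall>i. \<exists>n. set (take i w) = {1..n})"
proof (intro iffI conjI allI)
  assume min: "minimal_walk w"
  then show "w \<noteq> []" unfolding minimal_walk_def by simp
  fix i
  show "\<exists>n. set (take i w) = {1..n}"
  proof (induction i)
    case (Suc i)
    then obtain n where n: "set (take i w) = {1..n}" by blast
    show ?case
    proof (cases "i < length w")
      case True
      then have "w ! i \<notin> set (take i w) \<Longrightarrow> w ! i = card (set (take i w)) + 1"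
        using min unfolding minimal_walk_def by blast
      then have "w ! i \<notin> set (take i w) \<Longrightarrow> w ! i = Suc n" using n by simp
      then show ?thesis using n True by (cases "w ! i \<in> set (take i w)") (auto simp: take_Suc_conv_app_nth)
    qed (use n in auto)
  qed (intro exI[of _ 0], simp)
next
  assume prefix: "w \<noteq> [] \<and> (\<forall>i. \<exists>n. set (take i w) = {1..n})"
  have new: "w ! i = card (set (take i w)) + 1" if i: "i < length w" "w ! i \<notin> set (take i w)" for i
  proof -
    obtain n m where n: "set (take i w) = {1..n}" and m: "set (take (Suc i) w) = {1..m}"
      using prefix by meson
    have ins: "insert (w ! i) {1..n} = {1..m}" using i(1) n m by (simp add: take_Suc_conv_app_nth)
    have notin: "w ! i \<notin> {1..n}" using i n by simp
    then have "m = Suc n" using ins by (metis card_atLeastAtMost card_insert_disjoint finite_atLeastAtMost diff_Suc_1)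
    moreover have "w ! i \<in> {1..m}" using ins by blast
    ultimately show ?thesis using n notin by simp
  qed
  have "hd w = 1" using new[of 0] prefix by (simp add: hd_conv_nth)
  then show "minimal_walk w" using prefix new unfolding minimal_walk_def by blast
qed

lemma insert_1_shifted_interval_iff:
  assumes "0 \<notin> A"
  shows "(\<exists>m. insert 1 (Suc ` A) = {1..m}) \<longleftrightarrow> (\<exists>n. A = {1..n})"
proof
  assume "\<exists>m. insert 1 (Suc ` A) = {1..m}"
  then obtain m where m: "insert 1 (Suc ` A) = {1..m}" by blast
  have "x \<in> A \<longleftrightarrow> x \<in> {1..m - 1}" for x
    using assms m[THEN equalityD1, THEN subsetD, of "Suc x"] m[THEN equalityD2, THEN subsetD, of "Suc x"]
    by (cases x) auto
  then show "\<exists>n. A = {1..n}" by blast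
next
  assume "\<exists>n. A = {1..n}"
  then obtain n where "A = {1..n}" by blast
  moreover have "insert 1 (Suc ` {1..n}) = {1..Suc n}"
    by (auto simp: image_iff intro: bexI[of _ "x - 1" for x])
  ultimately show "\<exists>m. insert 1 (Suc ` A) = {1..m}" by blast
qed

lemma set_lift_walk: "set (lift_walk cs W) = insert 1 (Suc ` set W)"
  using insert_1_set_expand[of cs W] unfolding lift_walk_def by auto

lemma set_take_Suc_lift_walk: "set (take (Suc j) (lift_walk cs W)) = insert 1 (set (take j (expand cs W)))"
  unfolding lift_walk_def by (cases "j \<le> length (expand cs W)") auto

lemma all_nat_iff_all_Suc: "P 0 \<Longrightarrow> (\<forall>k. P k) \<longleftrightarrow> (\<forall>j. P (Suc j))"
  by (metis nat.exhaust)

lemma minimal_walk_lift_walk_iff: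
  assumes "W \<noteq> []" "0 \<notin> set W"
  shows "minimal_walk (lift_walk cs W) \<longleftrightarrow> minimal_walk W"
proof -
  have "0 \<notin> set (take i W)" for i using assms(2) in_set_takeD by fastforce
  note interval_iff = insert_1_shifted_interval_iff[OF this]
  have "(\<forall>k. \<exists>m. set (take k (lift_walk cs W)) = {1..m}) \<longleftrightarrow>
      (\<forall>j. \<exists>m. set (take (Suc j) (lift_walk cs W)) = {1..m})"
    by (rule all_nat_iff_all_Suc[where P = "\<lambda>k. \<exists>m. set (take k (lift_walk cs W)) = {1..m}"])
      (intro exI[of _ 0], simp)
  also have "\<dots> \<longleftrightarrow> (\<forall>j. \<exists>m. insert 1 (set (take j (expand cs W))) = {1..m})"
    unfolding set_take_Suc_lift_walk ..
  also have "\<dots> \<longleftrightarrow> (\<forall>i. \<exists>m. insert 1 (Suc ` set (take i W)) = {1..m})"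
  proof
    assume "\<forall>j. \<exists>m. insert 1 (set (take j (expand cs W))) = {1..m}"
    then show "\<forall>i. \<exists>m. insert 1 (Suc ` set (take i W)) = {1..m}"
      using shifted_prefix_set_expand by metis
  next
    assume "\<forall>i. \<exists>m. insert 1 (Suc ` set (take i W)) = {1..m}"
    then show "\<forall>j. \<exists>m. insert 1 (set (take j (expand cs W))) = {1..m}"
      using prefix_set_expand_shifted by metis
  qed
  finally show ?thesis
    using assms(1) interval_iff unfolding minimal_walk_iff_prefix_intervals by (simp add: lift_walk_def)
qed

lemma filter_steps_cong:
  "(\<And>a b. a \<in> set W \<Longrightarrow> b \<in> set W \<Longrightarrow> P (a, b) = Q (a, b)) \<Longrightarrow> filter P (steps W) = filter Q (steps W)"
  using set_steps_subset[of W] by (intro filter_cong) auto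

lemma steps_lift_walk: "liftable cs W \<Longrightarrow> steps (lift_walk cs W) = (1, 2) # steps (expand cs W) @ [(2, 1)]"
  unfolding liftable_def lift_walk_def
  by (simp add: steps_Cons steps_snoc hd_expand last_expand hd_append)

lemma length_filter_steps_lift_walk:
  assumes "liftable cs W"
  shows "length (filter P (steps (lift_walk cs W))) =
    length (filter (P \<circ> map_prod Suc Suc) (steps W)) + Suc (sum_list cs) * length (filter P [(1, 2), (2, 1)])"
  using length_filter_steps_expand[of cs W P] assms
  by (simp add: steps_lift_walk liftable_def)

lemma set_steps_lift_walk:
  assumes "liftable cs W"
  shows "set (steps (lift_walk cs W)) = insert (1, 2) (insert (2, 1) (map_prod Suc Suc ` set (steps W)))"
proof (intro set_eqI)
  fix t
  have mem: "x \<in> set xs \<longleftrightarrow> 0 < length (filter (\<lambda>s. s = x) xs)" for x :: "'a" and xs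
    by (simp add: filter_empty_conv)
  have "0 < length (filter (\<lambda>s. s = t) (steps (lift_walk cs W))) \<longleftrightarrow>
      0 < length (filter (\<lambda>s. s = t) (map (map_prod Suc Suc) (steps W))) \<or>
      0 < length (filter (\<lambda>s. s = t) [(1, 2), (2, 1)])"
    unfolding length_filter_steps_lift_walk[OF assms] filter_map by simp
  then show "t \<in> set (steps (lift_walk cs W)) \<longleftrightarrow>
      t \<in> insert (1, 2) (insert (2, 1) (map_prod Suc Suc ` set (steps W)))"
    unfolding mem[symmetric] by auto
qed

lemma walk_edges_lift_walk:
  "liftable cs W \<Longrightarrow> walk_edges (lift_walk cs W) = insert {1, 2} ((`) Suc ` walk_edges W)"
  unfolding walk_edges_conv_steps set_steps_lift_walk image_image by (auto simp: insert_commute)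

lemma walk_len_lift_walk: "liftable cs W \<Longrightarrow> walk_len (lift_walk cs W) = walk_len W + 2 * sum_list cs + 2"
  using length_expand[of cs W] unfolding liftable_def walk_len_def lift_walk_def by auto

lemma root_steps_lift_walk:
  assumes "liftable cs W"
  shows "root_steps (lift_walk cs W) = Suc (sum_list cs)"
proof -
  have "filter ((\<lambda>(a, b). a = 1) \<circ> map_prod Suc Suc) (steps W) = filter (\<lambda>_. False) (steps W)"
    using assms by (intro filter_steps_cong) (auto simp: liftable_def intro: gr0I)
  then show ?thesis unfolding root_steps_conv_steps length_filter_steps_lift_walk[OF assms] by simp
qed

lemma vcount_lift_walk:
  assumes "liftable cs W"
  shows "vcount (lift_walk cs W) = root_steps W"
proof -
  have "filter ((\<lambda>(a, b). a = 2 \<and> b \<noteq> 1) \<circ> map_prod Suc Suc) (steps W) = filter (\<lambda>(a, b). a = 1) (steps W)"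
    using assms by (intro filter_steps_cong) (auto simp: liftable_def intro: gr0I)
  then show ?thesis
    unfolding vcount_conv_steps root_steps_conv_steps length_filter_steps_lift_walk[OF assms] by simp
qed

lemma edge_mult_lift_walk_root_edge:
  assumes "liftable cs W"
  shows "edge_mult (lift_walk cs W) {1, 2} = 2 * Suc (sum_list cs)"
proof -
  have "filter ((\<lambda>(a, b). {a, b} = {1, 2}) \<circ> map_prod Suc Suc) (steps W) = filter (\<lambda>_. False) (steps W)"
    using assms by (intro filter_steps_cong) (auto simp: liftable_def doubleton_eq_iff intro: gr0I)
  then show ?thesis
    unfolding edge_mult_conv_steps length_filter_steps_lift_walk[OF assms] by (simp add: insert_commute)
qed

lemma edge_mult_lift_walk_shifted:
  assumes "liftable cs W" "e \<in> walk_edges W"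
  shows "edge_mult (lift_walk cs W) (Suc ` e) = edge_mult W e"
proof -
  have "0 \<notin> e" using walk_edges_subset[OF assms(2)] assms(1) by (auto simp: liftable_def)
  then have "{1, 2} \<noteq> Suc ` e" "{2, 1} \<noteq> Suc ` e" by (auto simp: image_iff)
  moreover have "({Suc a, Suc b} = Suc ` e) \<longleftrightarrow> ({a, b} = e)" for a b
    using inj_image_eq_iff[OF inj_Suc, of "{a, b}" e] by simp
  then have "(\<lambda>(a, b). {a, b} = Suc ` e) \<circ> map_prod Suc Suc = (\<lambda>(a, b). {a, b} = e)"
    by (auto simp: fun_eq_iff)
  ultimately show ?thesis
    unfolding edge_mult_conv_steps length_filter_steps_lift_walk[OF assms(1)] by (simp add: comp_def)
qed

lemma inj_on_image_Suc: "inj_on ((`) Suc) A"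
  by (simp add: inj_on_def inj_image_eq_iff)

lemma root_edge_notin_shifted_edges:
  assumes "liftable cs W"
  shows "{1, 2} \<notin> (`) Suc ` walk_edges W"
proof
  assume "{1, 2} \<in> (`) Suc ` walk_edges W"
  then obtain e where e: "e \<in> walk_edges W" "Suc ` e = {1, 2}" by auto
  then have "1 \<in> Suc ` e" by simp
  then have "0 \<in> e" by auto
  then show False using walk_edges_subset[OF e(1)] assms by (auto simp: liftable_def)
qed

lemma card_walk_edges_lift_walk:
  "liftable cs W \<Longrightarrow> card (walk_edges (lift_walk cs W)) = card (walk_edges W) + 1"
  using root_edge_notin_shifted_edges[of cs W] card_image[OF inj_on_image_Suc, of "walk_edges W"]
  by (simp add: walk_edges_lift_walk)

lemma card_set_lift_walk:
  assumes "liftable cs W"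
  shows "card (set (lift_walk cs W)) = card (set W) + 1"
proof -
  have "1 \<notin> Suc ` set W" using assms by (auto simp: liftable_def)
  then show ?thesis by (simp add: set_lift_walk card_image)
qed

lemma is_tree_lift_walk_iff:
  assumes "liftable cs W"
  shows "is_tree (set (lift_walk cs W)) (walk_edges (lift_walk cs W)) \<longleftrightarrow> is_tree (set W) (walk_edges W)"
proof -
  have "card (Suc ` e) = card e" for e by (simp add: card_image)
  then have "loopfree (walk_edges (lift_walk cs W)) \<longleftrightarrow> loopfree (walk_edges W)"
    unfolding loopfree_def walk_edges_lift_walk[OF assms] by simp
  moreover have "lift_walk cs W \<noteq> []" "W \<noteq> []" using assms by (auto simp: lift_walk_def liftable_def)
  ultimately show ?thesis
    using card_walk_edges_lift_walk[OF assms] card_set_lift_walk[OF assms] is_tree_walk_iff_card by simp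
qed

lemma proper_colouring_lift_walk:
  assumes "liftable cs W" "proper_colouring col (walk_edges W)"
  shows "proper_colouring (\<lambda>x. if x = 1 then \<not> col 1 else col (x - 1)) (walk_edges (lift_walk cs W))"
  unfolding proper_colouring_def
proof (intro allI impI)
  fix a b assume ab: "{a, b} \<in> walk_edges (lift_walk cs W)"
  show "(if a = 1 then \<not> col 1 else col (a - 1)) \<noteq> (if b = 1 then \<not> col 1 else col (b - 1))"
  proof (cases "{a, b} = {1, 2}")
    case False
    then obtain e where e: "e \<in> walk_edges W" "{a, b} = Suc ` e"
      using ab by (auto simp: walk_edges_lift_walk[OF assms(1)])
    obtain c d where "e = {c, d}" using walk_edge_doubleton[OF e(1)] by blast
    then have cd: "{c, d} \<in> walk_edges W" "{a, b} = {Suc c, Suc d}" using e by simp_all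
    have "c \<noteq> 0" "d \<noteq> 0" using walk_edges_subset[OF cd(1)] assms(1) by (auto simp: liftable_def intro: gr0I)
    moreover have "col c \<noteq> col d" using assms(2) cd(1) by (auto simp: proper_colouring_def)
    ultimately show ?thesis using cd(2) by (auto simp: doubleton_eq_iff)
  qed (auto simp: doubleton_eq_iff)
qed

lemma beta_le_card_set: "beta w \<le> card (set w)"
  unfolding beta_def walk_vertices_def by (simp add: card_mono)

lemma beta_lift_walk:
  assumes "liftable cs W" "is_tree (set W) (walk_edges W)"
  shows "beta (lift_walk cs W) = Suc (card (set W) - beta W)"
proof -
  have W: "W \<noteq> []" "1 \<in> set W" "0 \<notin> set W" using assms(1) hd_in_set[of W] by (auto simp: liftable_def)
  obtain col where col: "proper_colouring col (walk_edges W)"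
    using assms(2) W(1) is_tree_walk_iff_tree_walk tree_walk_proper_colouring by blast
  let ?col' = "\<lambda>x. if x = 1 then \<not> col 1 else col (x - 1)"
  have "beta (lift_walk cs W) = card {x \<in> set (lift_walk cs W). ?col' x = ?col' 1}"
    using proper_colouring_lift_walk[OF assms(1) col]
    by (intro beta_eq_card_colour_class) (auto simp: lift_walk_def)
  also have "{x \<in> set (lift_walk cs W). ?col' x = ?col' 1} = insert 1 (Suc ` {y \<in> set W. col y \<noteq> col 1})"
    unfolding set_lift_walk using W(3) by (auto simp: image_iff)
  also have "card \<dots> = Suc (card {y \<in> set W. col y \<noteq> col 1})"
    using W(3) by (subst card_insert_disjoint) (auto simp: card_image)
  also have "\<dots> = Suc (card (set W - {y \<in> set W. col y = col 1}))"
    by (rule arg_cong[of _ _ "\<lambda>A. Suc (card A)"]) auto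
  also have "\<dots> = Suc (card (set W) - beta W)"
    using beta_eq_card_colour_class[OF W(1,2) col] by (simp add: card_Diff_subset)
  finally show ?thesis .
qed

lemma prod_walk_edges_lift_walk:
  assumes "liftable cs W"
  shows "(\<Prod>e\<in>walk_edges (lift_walk cs W). p * X (edge_mult (lift_walk cs W) e)) =
    p * X (2 * Suc (sum_list cs)) * (\<Prod>e\<in>walk_edges W. p * X (edge_mult W e))"
proof -
  have "(\<Prod>e\<in>walk_edges (lift_walk cs W). p * X (edge_mult (lift_walk cs W) e)) =
      p * X (edge_mult (lift_walk cs W) {1, 2}) *
      (\<Prod>e\<in>(`) Suc ` walk_edges W. p * X (edge_mult (lift_walk cs W) e))"
    using root_edge_notin_shifted_edges[OF assms] by (simp add: walk_edges_lift_walk[OF assms])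
  also have "(\<Prod>e\<in>(`) Suc ` walk_edges W. p * X (edge_mult (lift_walk cs W) e)) =
      (\<Prod>e\<in>walk_edges W. p * X (edge_mult W e))"
    by (simp add: prod.reindex[OF inj_on_image_Suc] edge_mult_lift_walk_shifted[OF assms])
  finally show ?thesis by (simp only: edge_mult_lift_walk_root_edge[OF assms])
qed

lemma theta_lift_walk:
  assumes "liftable cs W" "is_tree (set W) (walk_edges W)"
  shows "theta1 \<alpha> p X (lift_walk cs W) = \<alpha> * (p * X (2 * Suc (sum_list cs))) * theta2 \<alpha> p X W"
    and "theta2 \<alpha> p X (lift_walk cs W) = (1 - \<alpha>) * (p * X (2 * Suc (sum_list cs))) * theta1 \<alpha> p X W"
proof -
  have "card (set (lift_walk cs W)) - beta (lift_walk cs W) = beta W"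
    using beta_lift_walk[OF assms] card_set_lift_walk[OF assms(1)] beta_le_card_set[of W] by simp
  then show "theta1 \<alpha> p X (lift_walk cs W) = \<alpha> * (p * X (2 * Suc (sum_list cs))) * theta2 \<alpha> p X W"
    and "theta2 \<alpha> p X (lift_walk cs W) = (1 - \<alpha>) * (p * X (2 * Suc (sum_list cs))) * theta1 \<alpha> p X W"
    unfolding theta1_def theta2_def walk_vertices_def prod_walk_edges_lift_walk[OF assms(1)]
      beta_lift_walk[OF assms]
    by (simp_all add: algebra_simps)
qed

lemma shuttle_append_inj:
  "shuttle c @ A = shuttle d @ B \<Longrightarrow> (A = [] \<or> hd A \<noteq> 1) \<Longrightarrow> (B = [] \<or> hd B \<noteq> 1) \<Longrightarrow> c = d \<and> A = B"
proof (induction c arbitrary: d)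
  case 0
  then show ?case by (cases d) (auto simp: shuttle_Suc)
next
  case (Suc c)
  then show ?case by (cases d) (auto simp: shuttle_Suc)
qed

lemma hd_expand_neq_1: "xs \<noteq> [] \<Longrightarrow> 0 \<notin> set xs \<Longrightarrow> hd (expand cs xs) \<noteq> 1"
  using hd_expand by (cases xs) auto

lemma expand_inj:
  assumes "length cs = count_list W 1" "0 \<notin> set W" "length cs' = count_list W' 1" "0 \<notin> set W'"
    and "expand cs W = expand cs' W'"
  shows "cs = cs' \<and> W = W'"
  using assms
proof (induction W arbitrary: cs cs' W')
  case Nil
  then have "W' = []" using expand_eq_Nil_iff[of cs' W'] by simp
  then show ?case using Nil by simp
next
  case (Cons x xs)
  have "W' \<noteq> []" using Cons.prems(5) expand_eq_Nil_iff[of cs "x # xs"] by auto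
  then obtain y ys where W': "W' = y # ys" by (cases W') auto
  have "x = y" using Cons.prems(5) hd_expand[of "x # xs" cs] hd_expand[of W' cs'] W' by simp
  show ?case
  proof (cases "x = 1")
    case True
    obtain c ds where cs: "cs = c # ds" using Cons.prems(1) True by (cases cs) auto
    obtain c' ds' where cs': "cs' = c' # ds'" using Cons.prems(3) True W' \<open>x = y\<close> by (cases cs') auto
    have "shuttle c @ expand ds xs = shuttle c' @ expand ds' ys"
      using Cons.prems(5) True cs cs' W' \<open>x = y\<close> by simp
    moreover have "expand ds xs = [] \<or> hd (expand ds xs) \<noteq> 1"
      using hd_expand_neq_1[of xs ds] Cons.prems(2) by auto
    moreover have "expand ds' ys = [] \<or> hd (expand ds' ys) \<noteq> 1"
      using hd_expand_neq_1[of ys ds'] Cons.prems(4) W' by auto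
    ultimately have "c = c'" "expand ds xs = expand ds' ys" using shuttle_append_inj by blast+
    then show ?thesis using Cons.IH[of ds ds' ys] Cons.prems True cs cs' W' \<open>x = y\<close> by simp
  next
    case False
    then show ?thesis using Cons.IH[of cs cs' ys] Cons.prems W' \<open>x = y\<close> by simp
  qed
qed

section \<open>Essential walks and their lifts\<close>

definition is_expansion :: "nat list \<Rightarrow> bool" where
  "is_expansion M \<longleftrightarrow> (\<exists>cs W. M = expand cs W \<and> length cs = count_list W 1 \<and> 0 \<notin> set W)"

lemma is_expansion_Nil: "is_expansion []"
  unfolding is_expansion_def by (intro exI[of _ "[]"]) simp

lemma is_expansion_Cons: "is_expansion M \<Longrightarrow> 1 < y \<Longrightarrow> is_expansion (y # M)"
proof -
  assume "is_expansion M" "1 < y"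
  then obtain cs W where W: "M = expand cs W" "length cs = count_list W 1" "0 \<notin> set W"
    unfolding is_expansion_def by blast
  show ?thesis
  proof (cases "y = 2")
    case True
    then have "y # M = expand (0 # cs) (1 # W)" using W(1) by simp
    then show ?thesis using W unfolding is_expansion_def by fastforce
  next
    case False
    then have "y # M = expand cs ((y - 1) # W)" "y - 1 \<noteq> 1" "y - 1 \<noteq> 0" using W(1) \<open>1 < y\<close> by auto
    then show ?thesis using W unfolding is_expansion_def by fastforce
  qed
qed

lemma is_expansion_excursion: "is_expansion M \<Longrightarrow> M \<noteq> [] \<Longrightarrow> hd M = 2 \<Longrightarrow> is_expansion (2 # 1 # M)"
proof -
  assume "is_expansion M" "M \<noteq> []" "hd M = 2"
  then obtain cs W where W: "M = expand cs W" "length cs = count_list W 1" "0 \<notin> set W"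
    unfolding is_expansion_def by blast
  then obtain W' where W': "W = 1 # W'" using \<open>M \<noteq> []\<close> \<open>hd M = 2\<close> hd_expand[of W cs] by (cases W) auto
  then obtain c cs' where cs: "cs = c # cs'" using W(2) by (cases cs) auto
  have "2 # 1 # M = expand (Suc c # cs') (1 # W')" using W(1) W' cs by (simp add: shuttle_Suc)
  then show ?thesis using W W' cs unfolding is_expansion_def by fastforce
qed

lemma is_expansion_if_root_edges:
  "0 \<notin> set M \<Longrightarrow> M \<noteq> [] \<Longrightarrow> hd M \<noteq> 1 \<Longrightarrow> last M \<noteq> 1 \<Longrightarrow>
    \<forall>e\<in>walk_edges M. 1 \<in> e \<longrightarrow> e = {1, 2} \<Longrightarrow> is_expansion M"
proof (induction M rule: induct_list012)
  case (2 y)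
  then show ?case using is_expansion_Cons[OF is_expansion_Nil] by simp
next
  case (3 y z zs)
  have "1 < y" using "3.prems"(1,3) by auto
  show ?case
  proof (cases "z = 1")
    case True
    then have "y = 2" using "3.prems"(5) \<open>1 < y\<close> by (auto simp: doubleton_eq_iff)
    have "zs \<noteq> []" using "3.prems"(4) True by auto
    then have "hd zs = 2" using "3.prems"(5) True by (cases zs) (auto simp: doubleton_eq_iff)
    have "is_expansion zs" using "3.IH"(1) "3.prems" \<open>zs \<noteq> []\<close> \<open>hd zs = 2\<close> by (cases zs) auto
    then show ?thesis using is_expansion_excursion \<open>zs \<noteq> []\<close> \<open>hd zs = 2\<close> True \<open>y = 2\<close> by simp
  next
    case False
    then have "is_expansion (z # zs)" using "3.IH"(2) "3.prems" by simp
    then show ?thesis using is_expansion_Cons \<open>1 < y\<close> by blast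
  qed
qed simp

lemma essential_iff:
  "essential w \<longleftrightarrow> w \<noteq> [] \<and> hd w = 1 \<and> last w = 1 \<and> 0 \<notin> set w \<and> minimal_walk w \<and>
     is_tree (set w) (walk_edges w)"
  unfolding essential_def closed_walk_def minimal_walk_def walk_vertices_def by (auto intro: gr0I)

lemma essential_lift_walk_iff: "liftable cs W \<Longrightarrow> essential (lift_walk cs W) \<longleftrightarrow> essential W"
  unfolding essential_iff using minimal_walk_lift_walk_iff is_tree_lift_walk_iff
  by (auto simp: liftable_def set_lift_walk) (simp_all add: lift_walk_def)

lemma count_list_eq_Suc_root_steps:
  assumes "w \<noteq> []" "last w = 1"
  shows "count_list w 1 = Suc (root_steps w)"
proof -
  have "root_steps w = length (filter ((=) 1 \<circ> fst) (steps w))"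
    unfolding root_steps_conv_steps
    by (rule arg_cong[where f = "\<lambda>P. length (filter P (steps w))"]) auto
  also have "\<dots> = length (filter ((=) 1) (map fst (steps w)))" by (simp add: filter_map)
  also have "\<dots> = count_list (butlast w) 1"
    by (simp add: map_fst_steps count_list_eq_length_filter)
  finally have "root_steps w = count_list (butlast w) 1" .
  moreover have "count_list (butlast w @ [last w]) 1 = Suc (count_list (butlast w) 1)"
    using assms(2) by simp
  ultimately show ?thesis using append_butlast_last_id[OF assms(1)] by simp
qed

lemma lift_walk_mem_Lam3_iff:
  assumes "liftable cs W" "1 \<le> f"
  shows "lift_walk cs W \<in> Lam3 (f + u) f v \<longleftrightarrow> W \<in> Lam u v \<and> sum_list cs = f - 1"
proof -
  have "1 \<notin> Suc ` e" if "e \<in> walk_edges W" for e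
    using walk_edges_subset[OF that] assms(1) by (auto simp: liftable_def)
  then have "{e \<in> walk_edges (lift_walk cs W). 1 \<in> e} = {{1, 2}}"
    by (auto simp: walk_edges_lift_walk[OF assms(1)])
  then have "lift_walk cs W \<in> Lam3 (f + u) f v \<longleftrightarrow> essential W \<and>
      walk_len W + 2 * sum_list cs + 2 = 2 * (f + u) \<and> Suc (sum_list cs) = f \<and> root_steps W = v"
    unfolding Lam3_def Lam2_def Lam_def
    by (simp add: essential_lift_walk_iff[OF assms(1)] walk_len_lift_walk[OF assms(1)]
      root_steps_lift_walk[OF assms(1)] vcount_lift_walk[OF assms(1)])
  also have "\<dots> \<longleftrightarrow> W \<in> Lam u v \<and> sum_list cs = f - 1"
    unfolding Lam_def using assms(2) by auto
  finally show ?thesis .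
qed

lemma eq_Cons_butlast_tl_snoc: "2 \<le> length w \<Longrightarrow> w = hd w # butlast (tl w) @ [last w]"
  by (cases w) (auto simp: last_ConsR)

lemma minimal_walk_nth_1:
  assumes "minimal_walk w" "1 < length w" "w ! 1 \<noteq> 1"
  shows "w ! 1 = 2"
proof -
  have "take 1 w = [1]" using assms(1) unfolding minimal_walk_def by (cases w) auto
  then have "w ! 1 = card (set (take 1 w)) + 1"
    using assms unfolding minimal_walk_def by auto
  then show ?thesis using \<open>take 1 w = [1]\<close> by simp
qed

lemma eq_if_card_filter_eq_1:
  "card {e \<in> E. P e} = 1 \<Longrightarrow> x \<in> E \<Longrightarrow> P x \<Longrightarrow> e \<in> E \<Longrightarrow> P e \<Longrightarrow> e = x"
  by (metis (mono_tags, lifting) card_1_singletonE mem_Collect_eq singletonD)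

lemma Lam2_middle:
  assumes "w \<in> Lam2 l r" "0 < l"
  obtains M where "w = 1 # M @ [1]" "M \<noteq> []" "hd M = 2" "last M = 2" "0 \<notin> set M"
    "\<forall>e\<in>walk_edges M. 1 \<in> e \<longrightarrow> e = {1, 2}"
proof -
  have ess: "essential w" and len: "walk_len w = 2 * l" and root: "card {e \<in> walk_edges w. 1 \<in> e} = 1"
    using assms(1) unfolding Lam2_def Lam_def by auto
  have w: "w \<noteq> []" "hd w = 1" "last w = 1" "0 \<notin> set w" "minimal_walk w"
    and lf: "loopfree (walk_edges w)"
    using ess is_tree_walk_iff_card unfolding essential_iff by blast+
  define M where "M = butlast (tl w)"
  have "3 \<le> length w" using len assms(2) unfolding walk_len_def by simp
  then have wM: "w = 1 # M @ [1]" and "M \<noteq> []"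
    using eq_Cons_butlast_tl_snoc[of w] w(2,3) unfolding M_def by (simp_all flip: length_greater_0_conv)
  have E: "walk_edges w = insert {1, hd M} (insert {last M, 1} (walk_edges M))"
    by (subst wM) (rule walk_edges_Cons_snoc[OF \<open>M \<noteq> []\<close>])
  have "hd M \<noteq> 1" "last M \<noteq> 1" using lf E by (auto simp: loopfree_def)
  moreover have "w ! 1 = hd M" "1 < length w" using \<open>M \<noteq> []\<close> by (simp_all add: wM hd_conv_nth nth_append)
  ultimately have "hd M = 2" using minimal_walk_nth_1[OF w(5)] by simp
  then have edge_1: "e = {1, 2}" if "e \<in> walk_edges w" "1 \<in> e" for e
    using eq_if_card_filter_eq_1[OF root, of "{1, hd M}"] that E by simp
  have "last M = 2" using edge_1[of "{last M, 1}"] E \<open>last M \<noteq> 1\<close> by (auto simp: doubleton_eq_iff)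
  moreover have "0 \<notin> set M" using w(4) wM by simp
  moreover have "\<forall>e\<in>walk_edges M. 1 \<in> e \<longrightarrow> e = {1, 2}" using edge_1 E by blast
  ultimately show ?thesis using that wM \<open>M \<noteq> []\<close> \<open>hd M = 2\<close> by blast
qed

lemma Lam2_obtain_lift_walk:
  assumes "w \<in> Lam2 l r" "0 < l"
  obtains cs W where "liftable cs W" "w = lift_walk cs W"
proof -
  obtain M where M: "w = 1 # M @ [1]" "M \<noteq> []" "hd M = 2" "last M = 2" "0 \<notin> set M"
    "\<forall>e\<in>walk_edges M. 1 \<in> e \<longrightarrow> e = {1, 2}"
    using Lam2_middle[OF assms] by blast
  then obtain cs W where W: "M = expand cs W" "length cs = count_list W 1" "0 \<notin> set W"
    using is_expansion_if_root_edges[of M] unfolding is_expansion_def by auto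
  have "W \<noteq> []" using W(1) M(2) by auto
  then have "hd W = 1" "last W = 1" using M(3,4) W(1) hd_expand[of W cs] last_expand[of W cs] by simp_all
  then have "liftable cs W" using W \<open>W \<noteq> []\<close> by (simp add: liftable_def)
  moreover have "w = lift_walk cs W" using M(1) W(1) by (simp add: lift_walk_def)
  ultimately show ?thesis by (rule that)
qed

text \<open>Every step leaving a is followed by a step that does not leave a.\<close>
lemma double_length_filter_steps_from_le:
  "(a, a) \<notin> set (steps w) \<Longrightarrow> last w = a \<Longrightarrow>
    2 * length (filter (\<lambda>(x, y). x = a) (steps w)) \<le> length (steps w)"
proof (induction w rule: induct_list012)
  case (3 x y zs)
  show ?case
  proof (cases "x = a")
    case True
    then have "y \<noteq> a" using "3.prems"(1) by auto
    then have "zs \<noteq> []" using "3.prems"(2) by auto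
    then have "steps (x # y # zs) = (x, y) # (y, hd zs) # steps zs" by (simp add: steps_Cons)
    moreover have "2 * length (filter (\<lambda>(x, y). x = a) (steps zs)) \<le> length (steps zs)"
      using "3.IH"(1) "3.prems" \<open>zs \<noteq> []\<close> \<open>steps (x # y # zs) = _\<close> by simp
    ultimately show ?thesis using True \<open>y \<noteq> a\<close> by simp
  next
    case False
    then show ?thesis using "3.IH"(2) "3.prems" by simp
  qed
qed simp_all

lemma mem_Lam_imp_le: "W \<in> Lam u v \<Longrightarrow> v \<le> u"
proof -
  assume W: "W \<in> Lam u v"
  then have "W \<noteq> []" "last W = 1" "loopfree (walk_edges W)" "walk_len W = 2 * u" "root_steps W = v"
    unfolding Lam_def essential_iff using is_tree_walk_iff_card by blast+
  moreover have "(1, 1) \<notin> set (steps W)"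
    using \<open>loopfree (walk_edges W)\<close> by (force simp: loopfree_def walk_edges_conv_steps)
  ultimately show "v \<le> u"
    using double_length_filter_steps_from_le[of 1 W] by (simp add: root_steps_conv_steps length_steps)
qed

lemma finite_Lam: "finite (Lam l r)"
proof (rule finite_subset)
  show "Lam l r \<subseteq> {w. set w \<subseteq> {0..2 * l + 1} \<and> length w = 2 * l + 1}"
  proof
    fix w assume w: "w \<in> Lam l r"
    then have "minimal_walk w" "walk_len w = 2 * l" "w \<noteq> []" unfolding Lam_def essential_iff by auto
    then have len: "length w = 2 * l + 1" unfolding walk_len_def by (cases w) auto
    obtain n where n: "set (take (length w) w) = {1..n}"
      using \<open>minimal_walk w\<close> unfolding minimal_walk_iff_prefix_intervals by blast
    then have "n \<le> length w" using card_length[of w] by simp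
    then show "w \<in> {w. set w \<subseteq> {0..2 * l + 1} \<and> length w = 2 * l + 1}" using n len by auto
  qed
qed (rule finite_lists_length_eq, simp)

section \<open>Counting\<close>

definition weak_compositions :: "nat \<Rightarrow> nat \<Rightarrow> nat list set" where
  "weak_compositions n k = {cs. length cs = k \<and> sum_list cs = n}"

lemma card_weak_compositions: "card (weak_compositions n k) = (n + k - 1) choose n"
  unfolding weak_compositions_def using card_length_sum_list[of k n] by simp

lemma bij_betw_lift_walk:
  assumes "1 \<le> f"
  shows "bij_betw (\<lambda>(cs, W). lift_walk cs W) (weak_compositions (f - 1) (Suc v) \<times> Lam u v) (Lam3 (f + u) f v)"
proof -
  have liftable: "liftable cs W" if "cs \<in> weak_compositions (f - 1) (Suc v)" "W \<in> Lam u v" for cs W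
    using that count_list_eq_Suc_root_steps[of W]
    by (auto simp: liftable_def weak_compositions_def Lam_def essential_iff)
  show ?thesis
    unfolding bij_betw_def
  proof (intro conjI inj_onI subset_antisym subsetI)
    fix x y assume x: "x \<in> weak_compositions (f - 1) (Suc v) \<times> Lam u v"
      and y: "y \<in> weak_compositions (f - 1) (Suc v) \<times> Lam u v"
      and eq: "(\<lambda>(cs, W). lift_walk cs W) x = (\<lambda>(cs, W). lift_walk cs W) y"
    obtain cs W where x': "x = (cs, W)" by (cases x)
    obtain cs' W' where y': "y = (cs', W')" by (cases y)
    have "liftable cs W" "liftable cs' W'" using x y x' y' liftable by auto
    moreover have "expand cs W = expand cs' W'" using eq x' y' by (simp add: lift_walk_def)
    ultimately show "x = y" using expand_inj x' y' unfolding liftable_def by blast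
  next
    fix w assume "w \<in> (\<lambda>(cs, W). lift_walk cs W) ` (weak_compositions (f - 1) (Suc v) \<times> Lam u v)"
    then show "w \<in> Lam3 (f + u) f v"
      using liftable lift_walk_mem_Lam3_iff[OF _ assms] by (auto simp: weak_compositions_def)
  next
    fix w assume w: "w \<in> Lam3 (f + u) f v"
    then obtain cs W where cs_W: "liftable cs W" "w = lift_walk cs W"
      using Lam2_obtain_lift_walk[of w "f + u" f] assms unfolding Lam3_def by auto
    then have "W \<in> Lam u v" "sum_list cs = f - 1" using w lift_walk_mem_Lam3_iff[OF _ assms] by auto
    moreover have "length cs = Suc v"
      using cs_W(1) \<open>W \<in> Lam u v\<close> count_list_eq_Suc_root_steps[of W] by (auto simp: liftable_def Lam_def)
    ultimately show "w \<in> (\<lambda>(cs, W). lift_walk cs W) ` (weak_compositions (f - 1) (Suc v) \<times> Lam u v)"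
      using cs_W(2) by (force simp: weak_compositions_def)
  qed
qed

lemma S2_eq_sum_S3:
  assumes "1 \<le> f"
  shows "S2 \<theta> (f + u) f = (\<Sum>v=0..u. S3 \<theta> (f + u) f v)"
proof -
  have "vcount w \<le> u" if w: "w \<in> Lam2 (f + u) f" for w
  proof -
    obtain cs W where "liftable cs W" "w = lift_walk cs W"
      using Lam2_obtain_lift_walk[OF w] assms by auto
    then have "lift_walk cs W \<in> Lam3 (f + u) f (vcount w)" using w by (simp add: Lam3_def)
    then show ?thesis
      using lift_walk_mem_Lam3_iff[OF \<open>liftable cs W\<close> assms] mem_Lam_imp_le by blast
  qed
  then have "(\<Sum>v=0..u. sum \<theta> {w \<in> Lam2 (f + u) f. vcount w = v}) = sum \<theta> (Lam2 (f + u) f)"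
    using finite_Lam[of "f + u" f] by (intro sum.group) (auto simp: Lam2_def)
  then show ?thesis unfolding S2_def S3_def Lam3_def by simp
qed

lemma S3_eq_if_lift_walk_weight:
  assumes "1 \<le> f"
    and weight: "\<And>cs W. cs \<in> weak_compositions (f - 1) (Suc v) \<Longrightarrow> W \<in> Lam u v \<Longrightarrow>
      \<theta> (lift_walk cs W) = c * \<eta> W"
  shows "S3 \<theta> (f + u) f v = c * real ((f + v - 1) choose (f - 1)) * S \<eta> u v"
proof -
  have "S3 \<theta> (f + u) f v = (\<Sum>(cs, W)\<in>weak_compositions (f - 1) (Suc v) \<times> Lam u v. \<theta> (lift_walk cs W))"
    unfolding S3_def using sum.reindex_bij_betw[OF bij_betw_lift_walk[OF assms(1)], of \<theta>]
    by (simp add: case_prod_beta')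
  also have "\<dots> = (\<Sum>cs\<in>weak_compositions (f - 1) (Suc v). \<Sum>W\<in>Lam u v. c * \<eta> W)"
    unfolding sum.cartesian_product[symmetric] by (intro sum.cong refl) (auto simp: weight)
  also have "\<dots> = real (card (weak_compositions (f - 1) (Suc v))) * (c * S \<eta> u v)"
    by (simp add: S_def sum_distrib_left)
  finally show ?thesis using assms(1) by (simp add: card_weak_compositions)
qed

theorem lemma2:
  fixes \<alpha> p :: real and X :: "nat \<Rightarrow> real" and f u :: nat
  assumes "0 < \<alpha>" "\<alpha> < 1" "0 < p" "1 \<le> f"
  shows "S2 (theta1 \<alpha> p X) (f + u) f = (\<Sum>v=0..u. S3 (theta1 \<alpha> p X) (f + u) f v) \<and>
         S2 (theta2 \<alpha> p X) (f + u) f = (\<Sum>v=0..u. S3 (theta2 \<alpha> p X) (f + u) f v) \<and>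
         (\<forall>v\<le>u. S3 (theta1 \<alpha> p X) (f + u) f v
           = \<alpha> * real ((f + v - 1) choose (f - 1)) * (p * X (2 * f)) * S (theta2 \<alpha> p X) u v) \<and>
         (\<forall>v\<le>u. S3 (theta2 \<alpha> p X) (f + u) f v
           = (1 - \<alpha>) * real ((f + v - 1) choose (f - 1)) * (p * X (2 * f)) * S (theta1 \<alpha> p X) u v)"
proof -
  have lifted: "liftable cs W" "is_tree (set W) (walk_edges W)" "2 * Suc (sum_list cs) = 2 * f"
    if "cs \<in> weak_compositions (f - 1) (Suc v)" "W \<in> Lam u v" for cs W v
    using that count_list_eq_Suc_root_steps[of W] assms(4)
    by (auto simp: liftable_def weak_compositions_def Lam_def essential_iff)
  have "S3 (theta1 \<alpha> p X) (f + u) f v =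
      \<alpha> * real ((f + v - 1) choose (f - 1)) * (p * X (2 * f)) * S (theta2 \<alpha> p X) u v" for v
  proof -
    have "S3 (theta1 \<alpha> p X) (f + u) f v =
        (\<alpha> * (p * X (2 * f))) * real ((f + v - 1) choose (f - 1)) * S (theta2 \<alpha> p X) u v"
      using theta_lift_walk(1) lifted by (intro S3_eq_if_lift_walk_weight[OF assms(4)]) metis
    then show ?thesis by (simp only: ac_simps)
  qed
  moreover have "S3 (theta2 \<alpha> p X) (f + u) f v =
      (1 - \<alpha>) * real ((f + v - 1) choose (f - 1)) * (p * X (2 * f)) * S (theta1 \<alpha> p X) u v" for v
  proof -
    have "S3 (theta2 \<alpha> p X) (f + u) f v =
        ((1 - \<alpha>) * (p * X (2 * f))) * real ((f + v - 1) choose (f - 1)) * S (theta1 \<alpha> p X) u v"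
      using theta_lift_walk(2) lifted by (intro S3_eq_if_lift_walk_weight[OF assms(4)]) metis
    then show ?thesis by (simp only: ac_simps)
  qed
  ultimately show ?thesis using S2_eq_sum_S3[OF assms(4)] by blast
qed

end
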